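(* Let $C>0$. There is a constant $C_1>0$ depending only on $C$ such that for any image width $w\geqslant2$ and any two lines $l,k$ that are integer at an image of width $w$ with different elevations $e_1\neq e_2$, $$N\bigl(s(l,C)\cap s(k,C)\bigr)\leqslant\frac{C_1 w}{|e_1-e_2|}.$$
   Context: For a line $l\subset\mathbb{R}^2$ and $C>0$, $s(l,C)=\{r\in\mathbb{R}^2\mid\rho(r,l)\leqslant C/2\}$, $\rho$ the Euclidean distance. A line is mostly horizontal inclined to the right if it has equation $y=ax+b$ with $0\leqslant a\leqslant1$; it is integer at an image of width $w$ if $a=\frac{e}{w-1}$ for some $e\in\{0,1,\dots,w-1\}$, called its elevation. For $D\subseteq\mathbb{R}^2$, $N(D)=|\mathbb{Z}^2\cap D|$. *)

theory Defs
  imports "HOL-Analysis.Analysis"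
begin

text \<open>Points of the plane are pairs of reals; the product metric on real \<times> real is Euclidean.\<close>

definition line :: "real \<Rightarrow> real \<Rightarrow> (real \<times> real) set" where
  "line a b = {(x, y). y = a * x + b}"

definition strip :: "(real \<times> real) set \<Rightarrow> real \<Rightarrow> (real \<times> real) set" where
  "strip l C = {r. infdist r l \<le> C / 2}"

definition integer_line_elev :: "nat \<Rightarrow> nat \<Rightarrow> (real \<times> real) set \<Rightarrow> bool" where
  "integer_line_elev w e l \<longleftrightarrow> e \<le> w - 1 \<and> (\<exists>b. l = line (real e / (real w - 1)) b)"

definition lattice_count :: "(real \<times> real) set \<Rightarrow> nat" where
  "lattice_count D = card {p :: int \<times> int. (real_of_int (fst p), real_of_int (snd p)) \<in> D}"

end

theory Submission
  imports Defs
begin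

text \<open>Near a line of slope at most 1 the Euclidean distance and the vertical distance agree up to a
factor 2, so each strip lies in a vertical band of height C around its line. Two such bands with
slopes differing by \<delta> = (e1 - e2)/(w - 1) meet only over an x-interval of length 4C/\<bar>\<delta>\<bar>, and over
each integer x there are at most 2C + 1 lattice points in a band. Hence the count is at most
(4C/\<bar>\<delta>\<bar> + 1)(2C + 1) \<le> (4C + 1)(2C + 1) w / \<bar>e1 - e2\<bar>.\<close>

definition vband :: "real \<Rightarrow> real \<Rightarrow> real \<Rightarrow> (real \<times> real) set" where
  "vband a b h = {(x, y). \<bar>y - a * x - b\<bar> \<le> h}"

lemma vertical_offset_le_dist_line:
  assumes "p \<in> line a b"
  shows "\<bar>y - a * x - b\<bar> \<le> (1 + \<bar>a\<bar>) * dist (x, y) p"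
proof -
  obtain u v where p: "p = (u, v)" and v: "v = a * u + b"
    using assms unfolding line_def by auto
  have dx: "\<bar>x - u\<bar> \<le> dist (x, y) p" and dy: "\<bar>y - v\<bar> \<le> dist (x, y) p"
    using dist_fst_le[of "(x, y)" p] dist_snd_le[of "(x, y)" p] by (auto simp: p dist_real_def)
  have "\<bar>y - a * x - b\<bar> = \<bar>(y - v) - a * (x - u)\<bar>"
    using v by (simp add: algebra_simps)
  also have "\<dots> \<le> \<bar>y - v\<bar> + \<bar>a\<bar> * \<bar>x - u\<bar>"
    by (metis abs_mult abs_triangle_ineq4)
  also have "\<dots> \<le> dist (x, y) p + \<bar>a\<bar> * dist (x, y) p"
    using dx dy by (intro add_mono mult_left_mono) auto
  finally show ?thesis by (simp add: algebra_simps)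
qed

lemma vertical_offset_le_infdist_line:
  "\<bar>y - a * x - b\<bar> \<le> (1 + \<bar>a\<bar>) * infdist (x, y) (line a b)"
proof -
  have ne: "line a b \<noteq> {}"
    unfolding line_def by auto
  have "\<bar>y - a * x - b\<bar> / (1 + \<bar>a\<bar>) \<le> dist (x, y) p" if "p \<in> line a b" for p
    using vertical_offset_le_dist_line[OF that, of y x]
    by (simp add: divide_le_eq mult.commute add_pos_nonneg)
  then have "\<bar>y - a * x - b\<bar> / (1 + \<bar>a\<bar>) \<le> infdist (x, y) (line a b)"
    unfolding infdist_notempty[OF ne] by (intro cINF_greatest[OF ne])
  then show ?thesis
    by (simp add: divide_le_eq mult.commute add_pos_nonneg)
qed

lemma strip_line_subset_vband:
  assumes "\<bar>a\<bar> \<le> 1"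
  shows "strip (line a b) C \<subseteq> vband a b C"
proof clarify
  fix x y
  assume "(x, y) \<in> strip (line a b) C"
  then have "2 * infdist (x, y) (line a b) \<le> C"
    unfolding strip_def by simp
  moreover have "(1 + \<bar>a\<bar>) * infdist (x, y) (line a b) \<le> 2 * infdist (x, y) (line a b)"
    using assms infdist_nonneg by (intro mult_right_mono) auto
  ultimately show "(x, y) \<in> vband a b C"
    using vertical_offset_le_infdist_line[of y a x b] unfolding vband_def by simp
qed

lemma finite_card_int_interval:
  fixes lo L :: real
  assumes "L \<ge> 0"
  shows "finite {x::int. lo \<le> of_int x \<and> of_int x \<le> lo + L}"
    and "real (card {x::int. lo \<le> of_int x \<and> of_int x \<le> lo + L}) \<le> L + 1"
proof -
  have eq: "{x::int. lo \<le> of_int x \<and> of_int x \<le> lo + L} = {\<lceil>lo\<rceil> .. \<lfloor>lo + L\<rfloor>}"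
    by (auto simp: ceiling_le_iff le_floor_iff)
  show "finite {x::int. lo \<le> of_int x \<and> of_int x \<le> lo + L}"
    unfolding eq by simp
  have "real_of_int (\<lfloor>lo + L\<rfloor> - \<lceil>lo\<rceil>) \<le> L"
    using of_int_floor_le[of "lo + L"] le_of_int_ceiling[of lo] by linarith
  then show "real (card {x::int. lo \<le> of_int x \<and> of_int x \<le> lo + L}) \<le> L + 1"
    unfolding eq using assms by (cases "\<lfloor>lo + L\<rfloor> - \<lceil>lo\<rceil> + 1 \<ge> 0") (auto simp: of_nat_nat)
qed

lemma vband_inter_abscissa_bound:
  assumes "(x, y) \<in> vband a1 b1 h \<inter> vband a2 b2 h" and "a1 \<noteq> a2"
  shows "\<bar>x + (b1 - b2) / (a1 - a2)\<bar> \<le> 2 * h / \<bar>a1 - a2\<bar>"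
proof -
  have "\<bar>(a1 - a2) * x + (b1 - b2)\<bar> \<le> 2 * h"
    using assms(1) unfolding vband_def by (simp add: abs_le_iff algebra_simps)
  moreover have "(a1 - a2) * x + (b1 - b2) = (a1 - a2) * (x + (b1 - b2) / (a1 - a2))"
    using assms(2) by (simp add: distrib_left)
  ultimately show ?thesis
    using assms(2) by (simp add: abs_mult pos_le_divide_eq mult.commute)
qed

lemma lattice_count_vband_inter_le:
  assumes D: "D \<subseteq> vband a1 b1 h \<inter> vband a2 b2 h" and "a1 \<noteq> a2" and "h \<ge> 0"
  shows "real (lattice_count D) \<le> (4 * h / \<bar>a1 - a2\<bar> + 1) * (2 * h + 1)"
proof -
  define L where "L = 4 * h / \<bar>a1 - a2\<bar>"
  define lo where "lo = - (b1 - b2) / (a1 - a2) - 2 * h / \<bar>a1 - a2\<bar>"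
  define X where "X = {x::int. lo \<le> of_int x \<and> of_int x \<le> lo + L}"
  define Y where "Y = (\<lambda>x::int. {y::int. a1 * of_int x + b1 - h \<le> of_int y
                                        \<and> of_int y \<le> a1 * of_int x + b1 - h + 2 * h})"
  have L: "L \<ge> 0"
    unfolding L_def using assms(3) by simp
  have X: "finite X" "real (card X) \<le> L + 1"
    unfolding X_def using finite_card_int_interval[OF L] by auto
  have Y: "finite (Y x)" "real (card (Y x)) \<le> 2 * h + 1" for x
    unfolding Y_def using finite_card_int_interval[of "2 * h" "a1 * of_int x + b1 - h"] assms(3)
    by auto
  have sub: "{p :: int \<times> int. (of_int (fst p), of_int (snd p)) \<in> D} \<subseteq> Sigma X Y"
  proof clarsimp
    fix x y :: int
    assume "(of_int x, of_int y) \<in> D"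
    then have xy: "(of_int x, of_int y) \<in> vband a1 b1 h \<inter> vband a2 b2 h"
      using D by blast
    have "x \<in> X"
      using vband_inter_abscissa_bound[OF xy assms(2)]
      unfolding X_def lo_def L_def by (simp only: abs_le_iff mem_Collect_eq) linarith
    moreover have "y \<in> Y x"
      using xy unfolding Y_def vband_def by (simp add: abs_le_iff)
    ultimately show "x \<in> X \<and> y \<in> Y x" ..
  qed
  have "lattice_count D \<le> card (Sigma X Y)"
    unfolding lattice_count_def using X(1) Y(1) by (intro card_mono[OF _ sub]) auto
  then have "real (lattice_count D) \<le> (\<Sum>x\<in>X. real (card (Y x)))"
    using card_SigmaI[OF X(1), of Y] Y(1) of_nat_mono by (metis of_nat_sum)
  also have "\<dots> \<le> real (card X) * (2 * h + 1)"
    using sum_mono[of X "\<lambda>x. real (card (Y x))" "\<lambda>_. 2 * h + 1"] Y(2) by simp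
  also have "\<dots> \<le> (L + 1) * (2 * h + 1)"
    using X(2) assms(3) by (intro mult_right_mono) auto
  finally show ?thesis
    unfolding L_def .
qed

lemma integer_line_elevD:
  assumes "integer_line_elev w e l" and "w \<ge> 2"
  shows "\<exists>b. l = line (real e / (real w - 1)) b" and "\<bar>real e / (real w - 1)\<bar> \<le> 1"
  using assms unfolding integer_line_elev_def by auto

lemma slope_gap_bound:
  fixes C :: real and w e1 e2 :: nat
  assumes "C \<ge> 0" and "w \<ge> 2" and "e1 \<le> w - 1" and "e2 \<le> w - 1" and "e1 \<noteq> e2"
  shows "4 * C / \<bar>real e1 / (real w - 1) - real e2 / (real w - 1)\<bar> + 1
           \<le> (4 * C + 1) * real w / \<bar>real e1 - real e2\<bar>"
proof -
  define W where "W = real w - 1"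
  define D where "D = \<bar>real e1 - real e2\<bar>"
  have W: "W \<ge> 1"
    unfolding W_def using assms(2) by simp
  have D: "D \<ge> 1" and DW: "D \<le> W"
    unfolding D_def W_def using assms(2-5) by auto
  have "\<bar>real e1 / W - real e2 / W\<bar> = D / W"
    unfolding D_def using W by (simp add: diff_divide_distrib[symmetric])
  then have "4 * C / \<bar>real e1 / W - real e2 / W\<bar> + 1 = (4 * C * W + D) / D"
    using D W by (simp add: field_simps)
  also have "\<dots> \<le> (4 * C + 1) * real w / D"
    using D DW assms(1) unfolding W_def by (intro divide_right_mono) (auto simp: algebra_simps)
  finally show ?thesis
    unfolding W_def D_def .
qed

theorem corollary1:
  fixes C :: real
  assumes "C > 0"
  shows "\<exists>C1 > 0. \<forall>(w::nat) (e1::nat) (e2::nat) l k.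
           w \<ge> 2 \<longrightarrow> integer_line_elev w e1 l \<longrightarrow> integer_line_elev w e2 k \<longrightarrow> e1 \<noteq> e2 \<longrightarrow>
           real (lattice_count (strip l C \<inter> strip k C))
             \<le> C1 * real w / \<bar>real e1 - real e2\<bar>"
proof (intro exI[of _ "(4 * C + 1) * (2 * C + 1)"] conjI allI impI)
  show "0 < (4 * C + 1) * (2 * C + 1)"
    using assms by simp
  fix w e1 e2 :: nat and l k
  assume w: "w \<ge> 2" and l: "integer_line_elev w e1 l" and k: "integer_line_elev w e2 k"
    and ne: "e1 \<noteq> e2"
  define a1 where "a1 = real e1 / (real w - 1)"
  define a2 where "a2 = real e2 / (real w - 1)"
  obtain b1 b2 where lb: "l = line a1 b1" and kb: "k = line a2 b2"
    using integer_line_elevD(1)[OF l w] integer_line_elevD(1)[OF k w] unfolding a1_def a2_def by blast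
  have "strip l C \<inter> strip k C \<subseteq> vband a1 b1 C \<inter> vband a2 b2 C"
    using strip_line_subset_vband integer_line_elevD(2)[OF l w] integer_line_elevD(2)[OF k w]
    unfolding lb kb a1_def a2_def by blast
  moreover have "a1 \<noteq> a2"
    using ne w unfolding a1_def a2_def by (simp add: divide_cancel_right)
  ultimately have "real (lattice_count (strip l C \<inter> strip k C))
                     \<le> (4 * C / \<bar>a1 - a2\<bar> + 1) * (2 * C + 1)"
    using assms by (intro lattice_count_vband_inter_le) auto
  also have "\<dots> \<le> (4 * C + 1) * real w / \<bar>real e1 - real e2\<bar> * (2 * C + 1)"
    using slope_gap_bound[of C w e1 e2] l k w ne assms
    unfolding a1_def a2_def integer_line_elev_def by (intro mult_right_mono) auto
  finally show "real (lattice_count (strip l C \<inter> strip k C))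
                  \<le> (4 * C + 1) * (2 * C + 1) * real w / \<bar>real e1 - real e2\<bar>"
    by (simp add: algebra_simps)
qed

end
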